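(* Let $M\ge 3$ be an integer, let $c>0$, $f_c>0$, $d>0$, $R_D>0$, $\theta_D\in(-\pi/2,\pi/2)$, and let $\alpha\in\mathbb{R}$ with $\alpha\neq 1$. For frequency offsets $\Delta f_1,\dots,\Delta f_M$ put $\xi_m=\Delta f_m-\frac{d^2f_c}{2R_D^2}(m-1)^2$ and $$X=\frac{2\pi^2}{c^2}\sum_{m,n=1}^M\big[2(\xi_m-\xi_n)\big]^2,\quad Y=\frac{4\pi^2 d f_c\cos\theta_D}{c^2}\sum_{m,n=1}^M 2(\xi_m-\xi_n)(m-n),\quad Z=\frac{8\pi^2 f_c^2 d^2\cos^2\theta_D}{c^2}\sum_{m,n=1}^M (m-n)^2 ,$$ and let $E=\{(R,\theta)\in\mathbb{R}^2: X(R-R_D)^2+2Y(R-R_D)(\theta-\theta_D)+Z(\theta-\theta_D)^2=M^2\}$, $\Delta_R=\max_E R-\min_E R$, $\Delta_\theta=\max_E\theta-\min_E\theta$. Let $X_{\rm pa},Y_{\rm pa},Z_{\rm pa}$ denote the values of $X,Y,Z$ when all $\Delta f_m=0$. If $$\Delta f_m=\frac{f_c d^2}{2R_D^2}\,\alpha\,(m-1)^2\quad\text{for all } m=1,\dots,M,$$ then $E$ is an ellipse and $$\Delta_R=\frac{2}{|1-\alpha|}\sqrt{\frac{M^2Z_{\rm pa}}{X_{\rm pa}Z_{\rm pa}-Y_{\rm pa}^2}},\qquad \Delta_\theta=2\sqrt{\frac{M^2X_{\rm pa}}{X_{\rm pa}Z_{\rm pa}-Y_{\rm pa}^2}} .$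$
   Context: Physical setting: a frequency diverse uniform linear array of $M$ antennas (spacing $d$, carrier $f_c$, offset $\Delta f_m$ at antenna $m$) focusing on a target at range $R_D$, angle $\theta_D$; $E$ models the half-power boundary of the beampattern in the (range, angle) plane and $\Delta_R,\Delta_\theta$ are the main-lobe beamwidths in range and angle. *)

theory Defs
  imports Complex_Main
begin

text \<open>Frequency offsets are given as a function df :: nat => real, used at indices 1..M.\<close>

definition xi :: "(nat \<Rightarrow> real) \<Rightarrow> real \<Rightarrow> real \<Rightarrow> real \<Rightarrow> nat \<Rightarrow> real" where
  "xi df fc d RD m = df m - d^2 * fc / (2 * RD^2) * (real m - 1)^2"

definition coefX :: "real \<Rightarrow> real \<Rightarrow> real \<Rightarrow> real \<Rightarrow> nat \<Rightarrow> (nat \<Rightarrow> real) \<Rightarrow> real" where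
  "coefX c fc d RD M df = 2 * pi^2 / c^2 *
     (\<Sum>m=1..M. \<Sum>n=1..M. (2 * (xi df fc d RD m - xi df fc d RD n))^2)"

definition coefY :: "real \<Rightarrow> real \<Rightarrow> real \<Rightarrow> real \<Rightarrow> real \<Rightarrow> nat \<Rightarrow> (nat \<Rightarrow> real) \<Rightarrow> real" where
  "coefY c fc d RD thD M df = 4 * pi^2 * d * fc * cos thD / c^2 *
     (\<Sum>m=1..M. \<Sum>n=1..M. 2 * (xi df fc d RD m - xi df fc d RD n) * (real m - real n))"

definition coefZ :: "real \<Rightarrow> real \<Rightarrow> real \<Rightarrow> real \<Rightarrow> nat \<Rightarrow> real" where
  "coefZ c fc d thD M = 8 * pi^2 * fc^2 * d^2 * (cos thD)^2 / c^2 *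
     (\<Sum>m=1..M. \<Sum>n=1..M. (real m - real n)^2)"

definition beamE :: "real \<Rightarrow> real \<Rightarrow> real \<Rightarrow> real \<Rightarrow> real \<Rightarrow> nat \<Rightarrow> (nat \<Rightarrow> real) \<Rightarrow> (real \<times> real) set" where
  "beamE c fc d RD thD M df =
     {(R, th). coefX c fc d RD M df * (R - RD)^2
             + 2 * coefY c fc d RD thD M df * (R - RD) * (th - thD)
             + coefZ c fc d thD M * (th - thD)^2 = (real M)^2}"

definition is_ellipse :: "(real \<times> real) set \<Rightarrow> bool" where
  "is_ellipse S \<longleftrightarrow> (\<exists>a b c x0 y0 K. a > 0 \<and> a * c - b^2 > 0 \<and> K > 0 \<and>
      S = {(x, y). a * (x - x0)^2 + 2 * b * (x - x0) * (y - y0) + c * (y - y0)^2 = K})"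

definition width_R :: "(real \<times> real) set \<Rightarrow> real" where
  "width_R S = Sup (fst ` S) - Inf (fst ` S)"

definition width_theta :: "(real \<times> real) set \<Rightarrow> real" where
  "width_theta S = Sup (snd ` S) - Inf (snd ` S)"

end

theory Submission
  imports Defs
begin

text \<open>With the given offsets every \<open>\<xi>\<^sub>m\<close> is \<open>1 - \<alpha>\<close> times its phased-array value, so \<open>X\<close> and
  \<open>Y\<close> are scaled by \<open>(1 - \<alpha>)\<^sup>2\<close> and \<open>1 - \<alpha>\<close> while \<open>Z\<close> is unchanged, and the discriminant
  \<open>X Z - Y\<^sup>2\<close> by \<open>(1 - \<alpha>)\<^sup>2\<close>. Up to a positive factor, \<open>X Z - Y\<^sup>2\<close> is the Cauchy-Schwarz defect
  of the vectors \<open>2 (\<xi>\<^sub>m - \<xi>\<^sub>n)\<close> and \<open>m - n\<close>, which is positive because \<open>\<xi>\<close> is quadratic,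
  not affine, in \<open>m\<close>; so \<open>E\<close> is an ellipse. Completing the square,
  \<open>c (a u\<^sup>2 + 2 b u v + c v\<^sup>2) = (c v + b u)\<^sup>2 + (a c - b\<^sup>2) u\<^sup>2\<close>, shows that the projection of
  \<open>a u\<^sup>2 + 2 b u v + c v\<^sup>2 = K\<close> onto the \<open>u\<close>-axis is the interval \<open>|u| \<le> sqrt (K c / (a c - b\<^sup>2))\<close>.\<close>

definition conic :: "real \<Rightarrow> real \<Rightarrow> real \<Rightarrow> real \<Rightarrow> real \<Rightarrow> real \<Rightarrow> (real \<times> real) set" where
  "conic a b c x0 y0 K =
     {(x, y). a * (x - x0)^2 + 2 * b * (x - x0) * (y - y0) + c * (y - y0)^2 = K}"

lemma is_ellipse_conic:
  assumes "a > 0" and "a * c - b^2 > 0" and "K > 0"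
  shows "is_ellipse (conic a b c x0 y0 K)"
  unfolding is_ellipse_def conic_def using assms by blast

lemma completed_square:
  fixes a b c u v :: real
  shows "c * (a * u^2 + 2 * b * u * v + c * v^2) = (c * v + b * u)^2 + (a * c - b^2) * u^2"
  by (simp add: algebra_simps power2_eq_square)

lemma pos_def_form_coeff_pos:
  fixes a b c :: real
  assumes "a > 0" and "a * c - b^2 > 0"
  shows "c > 0"
  using assms by (smt (verit) mult_nonneg_nonpos zero_le_power2)

lemma fst_image_conic:
  fixes a b c K x0 y0 :: real
  assumes "a > 0" and "a * c - b^2 > 0" and "K \<ge> 0"
  defines "r \<equiv> sqrt (K * c / (a * c - b^2))"
  shows "fst ` conic a b c x0 y0 K = {x0 - r .. x0 + r}"
proof -
  define D where "D = a * c - b^2"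
  have "c > 0" using assms(1,2) by (rule pos_def_form_coeff_pos)
  have "D > 0" using assms D_def by simp
  have on_conic: "(x, y) \<in> conic a b c x0 y0 K \<longleftrightarrow>
      (c * (y - y0) + b * (x - x0))^2 + D * (x - x0)^2 = c * K" for x y
    using completed_square[of c a "x - x0" b "y - y0"] \<open>c > 0\<close>
    by (auto simp: conic_def D_def)
  have "x \<in> fst ` conic a b c x0 y0 K \<longleftrightarrow> D * (x - x0)^2 \<le> c * K" for x
  proof
    assume "x \<in> fst ` conic a b c x0 y0 K"
    then obtain y where "(x, y) \<in> conic a b c x0 y0 K" by force
    then show "D * (x - x0)^2 \<le> c * K"
      unfolding on_conic by (smt (verit) zero_le_power2)
  next
    assume le: "D * (x - x0)^2 \<le> c * K"
    define y where "y = y0 + (sqrt (c * K - D * (x - x0)^2) - b * (x - x0)) / c"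
    have "c * (y - y0) + b * (x - x0) = sqrt (c * K - D * (x - x0)^2)"
      using \<open>c > 0\<close> by (simp add: y_def)
    then have "(x, y) \<in> conic a b c x0 y0 K"
      unfolding on_conic using le by simp
    then show "x \<in> fst ` conic a b c x0 y0 K" by force
  qed
  also have "D * (x - x0)^2 \<le> c * K \<longleftrightarrow> x0 - r \<le> x \<and> x \<le> x0 + r" for x
  proof -
    have "r \<ge> 0" "r^2 = c * K / D"
      using assms \<open>c > 0\<close> \<open>D > 0\<close> by (simp_all add: r_def D_def mult.commute)
    have "D * (x - x0)^2 \<le> c * K \<longleftrightarrow> (x - x0)^2 \<le> r^2"
      using \<open>D > 0\<close> by (simp add: \<open>r^2 = c * K / D\<close> pos_le_divide_eq mult.commute)
    also have "\<dots> \<longleftrightarrow> \<bar>x - x0\<bar> \<le> r"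
      using \<open>r \<ge> 0\<close> by (rule power2_le_iff_abs_le)
    finally show ?thesis by linarith
  qed
  finally have mem: "x \<in> fst ` conic a b c x0 y0 K \<longleftrightarrow> x0 - r \<le> x \<and> x \<le> x0 + r" for x .
  show ?thesis by (intro set_eqI) (simp only: atLeastAtMost_iff mem)
qed

lemma swap_image_conic: "prod.swap ` conic a b c x0 y0 K = conic c b a y0 x0 K"
  by (auto simp: conic_def image_iff algebra_simps)

lemma width_R_conic:
  fixes a b c K x0 y0 :: real
  assumes "a > 0" and "a * c - b^2 > 0" and "K \<ge> 0"
  shows "width_R (conic a b c x0 y0 K) = 2 * sqrt (K * c / (a * c - b^2))"
  using fst_image_conic[OF assms] assms pos_def_form_coeff_pos[OF assms(1,2)]
  by (simp add: width_R_def)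

lemma width_theta_conic:
  fixes a b c K x0 y0 :: real
  assumes "a > 0" and "a * c - b^2 > 0" and "K \<ge> 0"
  shows "width_theta (conic a b c x0 y0 K) = 2 * sqrt (K * a / (a * c - b^2))"
proof -
  have "c > 0" using assms(1,2) by (rule pos_def_form_coeff_pos)
  have "snd ` conic a b c x0 y0 K = fst ` (prod.swap ` conic a b c x0 y0 K)"
    by (simp add: image_image)
  also have "\<dots> = fst ` conic c b a y0 x0 K"
    by (simp only: swap_image_conic)
  finally have "snd ` conic a b c x0 y0 K = fst ` conic c b a y0 x0 K" .
  then show ?thesis
    using width_R_conic[of c a b K y0 x0] \<open>c > 0\<close> assms
    by (simp add: width_R_def width_theta_def mult.commute)
qed

lemma Cauchy_Schwarz_sum_strict:
  fixes u w :: "'a \<Rightarrow> real"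
  assumes "finite A"
    and indep: "\<And>s t. (\<forall>i\<in>A. s * u i + t * w i = 0) \<Longrightarrow> s = 0 \<and> t = 0"
  shows "(\<Sum>i\<in>A. u i * w i)^2 < (\<Sum>i\<in>A. (u i)^2) * (\<Sum>i\<in>A. (w i)^2)"
proof -
  define Su Sw Suw where "Su = (\<Sum>i\<in>A. (u i)^2)" and "Sw = (\<Sum>i\<in>A. (w i)^2)"
    and "Suw = (\<Sum>i\<in>A. u i * w i)"
  have sum_sq_pos: "(\<Sum>i\<in>A. (s * u i + t * w i)^2) > 0" if "s \<noteq> 0 \<or> t \<noteq> 0" for s t
  proof -
    have "\<not> (\<forall>i\<in>A. s * u i + t * w i = 0)"
    proof
      assume "\<forall>i\<in>A. s * u i + t * w i = 0"
      then have "s = 0 \<and> t = 0" by (rule indep)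
      with that show False by simp
    qed
    then obtain i where "i \<in> A" "s * u i + t * w i \<noteq> 0" by blast
    then show ?thesis
      using \<open>finite A\<close> by (intro sum_pos2[of _ i]) auto
  qed
  have expand: "(\<Sum>i\<in>A. (s * u i + t * w i)^2) = s^2 * Su + 2 * s * t * Suw + t^2 * Sw" for s t
  proof -
    have "(s * u i + t * w i)^2 = s^2 * (u i)^2 + 2 * s * t * (u i * w i) + t^2 * (w i)^2" for i
      by (simp add: power2_eq_square algebra_simps)
    then show ?thesis
      by (simp add: Su_def Sw_def Suw_def sum.distrib sum_distrib_left)
  qed
  have "Sw > 0" using sum_sq_pos[of 0 1] by (simp add: Sw_def)
  have "0 < (\<Sum>i\<in>A. (Sw * u i + (- Suw) * w i)^2)"
    using \<open>Sw > 0\<close> by (intro sum_sq_pos) simp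
  also have "\<dots> = Sw * (Su * Sw - Suw^2)"
    unfolding expand by (simp add: power2_eq_square algebra_simps)
  finally have "Sw * (Su * Sw - Suw^2) > 0" .
  then show ?thesis
    using \<open>Sw > 0\<close> by (simp add: zero_less_mult_iff Su_def Sw_def Suw_def)
qed

lemma Cauchy_Schwarz_strict_nonaffine:
  fixes \<xi> :: "nat \<Rightarrow> real"
  assumes "M \<ge> 2" and "\<not> (\<exists>a b. \<forall>m\<in>{1..M}. \<xi> m = a + b * real m)"
  defines "A \<equiv> {1..M} \<times> {1..M}"
  shows "(\<Sum>(m, n)\<in>A. 2 * (\<xi> m - \<xi> n) * (real m - real n))^2
    < (\<Sum>(m, n)\<in>A. (2 * (\<xi> m - \<xi> n))^2) * (\<Sum>(m, n)\<in>A. (real m - real n)^2)"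
proof -
  define u w where "u = (\<lambda>(m, n). 2 * (\<xi> m - \<xi> n))" and "w = (\<lambda>(m, n). real m - real n)"
  have "(\<Sum>i\<in>A. u i * w i)^2 < (\<Sum>i\<in>A. (u i)^2) * (\<Sum>i\<in>A. (w i)^2)"
  proof (rule Cauchy_Schwarz_sum_strict)
    show "finite A" by (simp add: A_def)
    fix s t
    assume vanish: "\<forall>i\<in>A. s * u i + t * w i = 0"
    have "s = 0"
    proof (rule ccontr)
      assume "s \<noteq> 0"
      have "\<xi> m = (\<xi> 1 + t / (2 * s)) + (- t / (2 * s)) * real m" if "m \<in> {1..M}" for m
      proof -
        have "(m, 1) \<in> A" using that by (simp add: A_def)
        then have "s * (2 * (\<xi> m - \<xi> 1)) + t * (real m - 1) = 0"
          using vanish by (force simp: u_def w_def)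
        moreover have "2 * s * (\<xi> m - ((\<xi> 1 + t / (2 * s)) + (- t / (2 * s)) * real m))
            = s * (2 * (\<xi> m - \<xi> 1)) + t * (real m - 1)"
          using \<open>s \<noteq> 0\<close> by (simp add: field_simps)
        ultimately show ?thesis using \<open>s \<noteq> 0\<close> by simp
      qed
      then show False using assms(2) by blast
    qed
    moreover have "(2, 1) \<in> A" using \<open>M \<ge> 2\<close> by (simp add: A_def)
    ultimately show "s = 0 \<and> t = 0" using vanish by (force simp: w_def)
  qed
  then show ?thesis by (simp only: u_def w_def split_def)
qed

lemma coef_discriminant_pos:
  assumes "M \<ge> 2" and "c \<noteq> 0" and "fc \<noteq> 0" and "d \<noteq> 0" and "cos thD \<noteq> 0"
    and "\<not> (\<exists>a b. \<forall>m\<in>{1..M}. xi df fc d RD m = a + b * real m)"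
  shows "coefX c fc d RD M df * coefZ c fc d thD M - (coefY c fc d RD thD M df)^2 > 0"
proof -
  let ?\<xi> = "xi df fc d RD"
  define A where "A = {1..M} \<times> {1..M}"
  define Su Suw Sw where "Su = (\<Sum>(m, n)\<in>A. (2 * (?\<xi> m - ?\<xi> n))^2)"
    and "Suw = (\<Sum>(m, n)\<in>A. 2 * (?\<xi> m - ?\<xi> n) * (real m - real n))"
    and "Sw = (\<Sum>(m, n)\<in>A. (real m - real n)^2)"
  have X: "coefX c fc d RD M df = 2 * pi^2 / c^2 * Su"
    by (simp add: coefX_def Su_def A_def sum.cartesian_product)
  have Y: "coefY c fc d RD thD M df = 4 * pi^2 * d * fc * cos thD / c^2 * Suw"
    by (simp add: coefY_def Suw_def A_def sum.cartesian_product)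
  have Z: "coefZ c fc d thD M = 8 * pi^2 * fc^2 * d^2 * (cos thD)^2 / c^2 * Sw"
    by (simp add: coefZ_def Sw_def A_def sum.cartesian_product)
  have "coefX c fc d RD M df * coefZ c fc d thD M - (coefY c fc d RD thD M df)^2
      = 16 * pi^4 * fc^2 * d^2 * (cos thD)^2 / c^4 * (Su * Sw - Suw^2)"
    unfolding X Y Z using \<open>c \<noteq> 0\<close> by (simp add: field_simps power2_eq_square power4_eq_xxxx)
  moreover have "Suw^2 < Su * Sw"
    using Cauchy_Schwarz_strict_nonaffine[OF assms(1,6)] by (simp add: Su_def Suw_def Sw_def A_def)
  ultimately show ?thesis using assms(2-5) by simp
qed

lemma coefX_pos:
  fixes thD :: real
  assumes "M \<ge> 2" and "c \<noteq> 0" and "fc \<noteq> 0" and "d \<noteq> 0" and "cos thD \<noteq> 0"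
    and "\<not> (\<exists>a b. \<forall>m\<in>{1..M}. xi df fc d RD m = a + b * real m)"
  shows "coefX c fc d RD M df > 0"
proof -
  have "coefX c fc d RD M df \<ge> 0" "coefZ c fc d thD M \<ge> 0"
    by (simp_all add: coefX_def coefZ_def sum_nonneg)
  moreover have "coefX c fc d RD M df * coefZ c fc d thD M > 0"
    using coef_discriminant_pos[OF assms] by (smt (verit) zero_le_power2)
  ultimately show ?thesis by (simp add: order_less_le)
qed

lemma xi_quadratic_offsets:
  assumes "\<forall>m\<in>{1..M}. df m = fc * d^2 / (2 * RD^2) * alpha * (real m - 1)^2"
  shows "\<forall>m\<in>{1..M}. xi df fc d RD m = (1 - alpha) * xi (\<lambda>_. 0) fc d RD m"
proof -
  define k where "k = fc * d^2 / (2 * RD^2)"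
  have "d^2 * fc / (2 * RD^2) = k" by (simp add: k_def mult.commute)
  then show ?thesis
    using assms by (simp add: xi_def flip: k_def) (simp add: algebra_simps)
qed

lemma xi_zero_offsets_not_affine:
  assumes "M \<ge> 3" and "fc \<noteq> 0" and "d \<noteq> 0" and "RD \<noteq> 0"
  shows "\<not> (\<exists>a b. \<forall>m\<in>{1..M}. xi (\<lambda>_. 0) fc d RD m = a + b * real m)"
proof
  assume "\<exists>a b. \<forall>m\<in>{1..M}. xi (\<lambda>_. 0) fc d RD m = a + b * real m"
  then obtain a b where affine: "\<forall>m\<in>{1..M}. xi (\<lambda>_. 0) fc d RD m = a + b * real m" by blast
  define k where "k = d^2 * fc / (2 * RD^2)"
  have "k \<noteq> 0" using assms by (simp add: k_def)
  have "xi (\<lambda>_. 0) fc d RD 1 = a + b" "xi (\<lambda>_. 0) fc d RD 2 = a + 2 * b"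
    "xi (\<lambda>_. 0) fc d RD 3 = a + 3 * b"
    using affine \<open>M \<ge> 3\<close> by auto
  moreover have "xi (\<lambda>_. 0) fc d RD 1 = 0" "xi (\<lambda>_. 0) fc d RD 2 = - k"
    "xi (\<lambda>_. 0) fc d RD 3 = - 4 * k"
    by (simp_all add: xi_def k_def)
  ultimately have "a + b = 0" "a + 2 * b = - k" "a + 3 * b = - 4 * k" by simp_all
  then show False using \<open>k \<noteq> 0\<close> by linarith
qed

lemma coefX_scale:
  assumes "\<forall>m\<in>{1..M}. xi df fc d RD m = \<beta> * xi df' fc d RD m"
  shows "coefX c fc d RD M df = \<beta>^2 * coefX c fc d RD M df'"
  using assms unfolding coefX_def sum_distrib_left
  by (auto intro!: sum.cong simp: power2_eq_square algebra_simps)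

lemma coefY_scale:
  assumes "\<forall>m\<in>{1..M}. xi df fc d RD m = \<beta> * xi df' fc d RD m"
  shows "coefY c fc d RD thD M df = \<beta> * coefY c fc d RD thD M df'"
  using assms unfolding coefY_def sum_distrib_left
  by (auto intro!: sum.cong simp: algebra_simps)

theorem proposition1:
  fixes M :: nat and c fc d RD thD alpha :: real and df :: "nat \<Rightarrow> real"
  assumes "M \<ge> 3" and "c > 0" and "fc > 0" and "d > 0" and "RD > 0"
    and "- (pi / 2) < thD" and "thD < pi / 2"
    and "alpha \<noteq> 1"
    and "\<forall>m\<in>{1..M}. df m = fc * d^2 / (2 * RD^2) * alpha * (real m - 1)^2"
  shows "is_ellipse (beamE c fc d RD thD M df)
    \<and> width_R (beamE c fc d RD thD M df) =
        2 / \<bar>1 - alpha\<bar> * sqrt ((real M)^2 * coefZ c fc d thD M /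
          (coefX c fc d RD M (\<lambda>_. 0) * coefZ c fc d thD M - (coefY c fc d RD thD M (\<lambda>_. 0))^2))
    \<and> width_theta (beamE c fc d RD thD M df) =
        2 * sqrt ((real M)^2 * coefX c fc d RD M (\<lambda>_. 0) /
          (coefX c fc d RD M (\<lambda>_. 0) * coefZ c fc d thD M - (coefY c fc d RD thD M (\<lambda>_. 0))^2))"
proof -
  define \<beta> where "\<beta> = 1 - alpha"
  define X Y Z where "X = coefX c fc d RD M (\<lambda>_. 0)" and "Y = coefY c fc d RD thD M (\<lambda>_. 0)"
    and "Z = coefZ c fc d thD M"
  have \<xi>: "\<forall>m\<in>{1..M}. xi df fc d RD m = \<beta> * xi (\<lambda>_. 0) fc d RD m"
    unfolding \<beta>_def using assms(9) by (rule xi_quadratic_offsets)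
  have E: "beamE c fc d RD thD M df = conic (\<beta>^2 * X) (\<beta> * Y) Z RD thD ((real M)^2)"
    unfolding beamE_def conic_def coefX_scale[OF \<xi>] coefY_scale[OF \<xi>] X_def Y_def Z_def ..
  have "cos thD > 0" using assms(6,7) by (intro cos_gt_zero_pi) auto
  then have "M \<ge> 2" "c \<noteq> 0" "fc \<noteq> 0" "d \<noteq> 0" "cos thD \<noteq> 0" using assms by simp_all
  moreover have "\<not> (\<exists>a b. \<forall>m\<in>{1..M}. xi (\<lambda>_. 0) fc d RD m = a + b * real m)"
    using assms by (intro xi_zero_offsets_not_affine) auto
  ultimately have "X > 0" "X * Z - Y^2 > 0"
    unfolding X_def Y_def Z_def by (rule coefX_pos, rule coef_discriminant_pos)
  moreover have "\<beta> \<noteq> 0" using assms(8) by (simp add: \<beta>_def)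
  moreover have disc: "\<beta>^2 * X * Z - (\<beta> * Y)^2 = \<beta>^2 * (X * Z - Y^2)"
    by (simp add: power_mult_distrib algebra_simps)
  ultimately have pos: "\<beta>^2 * X > 0" "\<beta>^2 * X * Z - (\<beta> * Y)^2 > 0" by simp_all
  have "(real M)^2 > 0" using assms(1) by simp
  then have "is_ellipse (beamE c fc d RD thD M df)"
    unfolding E by (rule is_ellipse_conic[OF pos])
  moreover have "width_R (beamE c fc d RD thD M df) = 2 * sqrt ((real M)^2 * Z / (\<beta>^2 * (X * Z - Y^2)))"
    unfolding E using width_R_conic[OF pos] disc by simp
  moreover have "width_theta (beamE c fc d RD thD M df) = 2 * sqrt ((real M)^2 * X / (X * Z - Y^2))"
    unfolding E using width_theta_conic[OF pos] disc \<open>\<beta> \<noteq> 0\<close> by simp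
  ultimately show ?thesis
    by (simp add: X_def Y_def Z_def \<beta>_def real_sqrt_divide real_sqrt_mult)
qed

end
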